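(* Let $\mu\in\mathcal{M}^+(\mathbb{R}^d)$ be compactly supported and let $V$ be a measure vector field satisfying (V1). Then for $N$ sufficiently large, $$\|\mu-\mathcal{A}_N^x(\mu)\|_{BL^*}\le\sqrt d\,\Delta_N^2\|\mu\|_{BL^*},\qquad \|V[\mu]-\mathcal{A}_N^v(V[\mu])\|_{BL^*}\le 2\sqrt d\,\Delta_N\|\mu\|_{BL^*}.$$
   Context: A measure vector field is a map $V:\mathcal{M}^+(\mathbb{R}^d)\to\mathcal{M}^+(\mathbb{R}^d\times\mathbb{R}^d)$ ($\mathcal{M}^+$: finite nonnegative Borel measures) with $\pi_1^{\#}V[\mu]=\mu$, $\pi_1(x,v)=x$; (V1): there is $C_S>0$ with $\sup_{(x,v)\in\operatorname{supp}V[\mu]}|v|\le C_S(1+\sup_{(x,v)\in\operatorname{supp}V[\mu]}|x|)$. $\|f\|_{BL}=\max(\sup|f|,\operatorname{Lip}(f))$, $\|\mu\|_{BL^*}=\sup\{\int\psi\,d\mu:\|\psi\|_{BL}\le1\}$ (on $\mathbb{R}^d$ or $\mathbb{R}^{2d}$). For $N\in\mathbb{N}$ let $\Delta_N=1/N$; let $x_1,\dots,x_I$ enumerate $(N^{-2}\mathbb{Z}^d)\cap[-N,N]^d$ and $v_1,\dots,v_J$ enumerate $(N^{-1}\mathbb{Z}^d)\cap[-N,N]^d$; set $Q_i=x_i+[0,\Delta_N^2)^d$, $Q'_j=v_j+[0,\Delta_N)^d$. Define $\mathcal{A}_N^x(\mu)=\sum_{i=1}^I\mu(Q_i)\delta_{x_i}$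 and, for $W\in\mathcal{M}^+(\mathbb{R}^d\times\mathbb{R}^d)$, $\mathcal{A}_N^v(W)=\sum_{i=1}^I\sum_{j=1}^J W(Q_i\times Q'_j)\delta_{(x_i,v_j)}$. *)

theory Defs
  imports "HOL-Analysis.Analysis"
begin

definition finite_borel_measure :: "'a::topological_space measure \<Rightarrow> bool" where
  "finite_borel_measure M \<longleftrightarrow> sets M = sets borel \<and> finite_measure M"

definition msupp :: "'a::metric_space measure \<Rightarrow> 'a set" where
  "msupp M = {z. \<forall>e>0. emeasure M (ball z e) > 0}"

definition measure_vector_field ::
  "('a::euclidean_space measure \<Rightarrow> ('a \<times> 'a) measure) \<Rightarrow> bool" where
  "measure_vector_field V \<longleftrightarrow>
     (\<forall>\<mu>. finite_borel_measure \<mu> \<longrightarrow>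
        finite_borel_measure (V \<mu>) \<and> distr (V \<mu>) borel fst = \<mu>)"

definition V1 :: "('a::euclidean_space measure \<Rightarrow> ('a \<times> 'a) measure) \<Rightarrow> bool" where
  "V1 V \<longleftrightarrow> (\<exists>C>0. \<forall>\<mu>. finite_borel_measure \<mu> \<longrightarrow>
      (SUP z\<in>msupp (V \<mu>). ereal (norm (snd z)))
        \<le> ereal C * (1 + (SUP z\<in>msupp (V \<mu>). ereal (norm (fst z)))))"

definition BL1 :: "('a::metric_space \<Rightarrow> real) set" where
  "BL1 = {\<psi>. (\<forall>x. \<bar>\<psi> x\<bar> \<le> 1) \<and> 1-lipschitz_on UNIV \<psi>}"

definition bl_norm :: "'a::metric_space measure \<Rightarrow> real" where
  "bl_norm M = (SUP \<psi>\<in>BL1. integral\<^sup>L M \<psi>)"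

definition bl_dist :: "'a::metric_space measure \<Rightarrow> 'a measure \<Rightarrow> real" where
  "bl_dist M M' = (SUP \<psi>\<in>BL1. integral\<^sup>L M \<psi> - integral\<^sup>L M' \<psi>)"

definition grid :: "real \<Rightarrow> nat \<Rightarrow> 'a::euclidean_space set" where
  "grid h N = {x. \<forall>b\<in>Basis. (\<exists>k::int. x \<bullet> b = real_of_int k * h) \<and> \<bar>x \<bullet> b\<bar> \<le> real N}"

definition grid_x :: "nat \<Rightarrow> 'a::euclidean_space set" where
  "grid_x N = grid (1 / real N ^ 2) N"

definition grid_v :: "nat \<Rightarrow> 'a::euclidean_space set" where
  "grid_v N = grid (1 / real N) N"

definition cube :: "'a::euclidean_space \<Rightarrow> real \<Rightarrow> 'a set" where
  "cube x h = {y. \<forall>b\<in>Basis. x \<bullet> b \<le> y \<bullet> b \<and> y \<bullet> b < x \<bullet> b + h}"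

definition dirac_sum :: "'a::topological_space set \<Rightarrow> ('a \<Rightarrow> ennreal) \<Rightarrow> 'a measure" where
  "dirac_sum G w = measure_of UNIV (sets borel) (\<lambda>A. \<Sum>x\<in>G. w x * indicator A x)"

definition approx_x :: "nat \<Rightarrow> 'a::euclidean_space measure \<Rightarrow> 'a measure" where
  "approx_x N \<mu> = dirac_sum (grid_x N) (\<lambda>x. emeasure \<mu> (cube x (1 / real N ^ 2)))"

definition approx_v :: "nat \<Rightarrow> ('a::euclidean_space \<times> 'a) measure \<Rightarrow> ('a \<times> 'a) measure" where
  "approx_v N W = dirac_sum (grid_x N \<times> grid_v N)
     (\<lambda>(x, v). emeasure W (cube x (1 / real N ^ 2) \<times> cube v (1 / real N)))"

end

theory Submission
  imports Defs
begin

(* On its support, which lies in [-N,N]^d once N is large, the approximation A_N^x(mu) is the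
   push-forward of mu under rounding every coordinate down to the lattice N^-2 Z, because each
   cube Q_i is exactly the preimage of its corner x_i.  Likewise A_N^v(V[mu]) is the push-forward
   of V[mu] under rounding x down to N^-2 Z^d and v down to N^-1 Z^d; condition (V1) keeps the
   support of V[mu] bounded.  Rounding with step h moves a point by at most sqrt d * h, and pushing
   a measure forward along a map that moves points by at most c changes the integral of every
   1-Lipschitz test function by at most c times the mass.  The mass of mu, which is also that of
   V[mu], is at most the BL* norm of mu (test with the constant 1). *)

definition grid_floor :: "real \<Rightarrow> 'a::euclidean_space \<Rightarrow> 'a" where
  "grid_floor h y = (\<Sum>b\<in>Basis. (of_int \<lfloor>(y \<bullet> b) / h\<rfloor> * h) *\<^sub>R b)"

lemma inner_grid_floor: "b \<in> Basis \<Longrightarrow> grid_floor h y \<bullet> b = of_int \<lfloor>(y \<bullet> b) / h\<rfloor> * h"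
  unfolding grid_floor_def by (simp add: inner_sum_left inner_Basis if_distrib cong: if_cong)

lemma borel_measurable_grid_floor[measurable]: "grid_floor h \<in> borel_measurable borel"
  unfolding grid_floor_def by measurable

lemma mem_cube_grid_floor:
  assumes h: "h > 0"
  shows "y \<in> cube (grid_floor h y) h"
  unfolding cube_def
proof (intro CollectI ballI conjI)
  fix b :: 'a assume b: "b \<in> Basis"
  let ?t = "y \<bullet> b"
  have "of_int \<lfloor>?t / h\<rfloor> \<le> ?t / h"
    by linarith
  then have "of_int \<lfloor>?t / h\<rfloor> * h \<le> ?t"
    by (simp only: pos_le_divide_eq[OF h])
  moreover have "?t / h < of_int \<lfloor>?t / h\<rfloor> + 1"
    by linarith
  then have "?t < (of_int \<lfloor>?t / h\<rfloor> + 1) * h"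
    by (simp only: pos_divide_less_eq[OF h])
  ultimately show "grid_floor h y \<bullet> b \<le> ?t" "?t < grid_floor h y \<bullet> b + h"
    using b by (simp_all add: inner_grid_floor distrib_right)
qed

lemma dist_grid_floor_le:
  fixes y :: "'a::euclidean_space"
  assumes h: "h > 0"
  shows "dist y (grid_floor h y) \<le> sqrt (real DIM('a)) * h"
proof -
  have coord: "((y - grid_floor h y) \<bullet> b)\<^sup>2 \<le> h\<^sup>2" if b: "b \<in> Basis" for b
  proof -
    have "grid_floor h y \<bullet> b \<le> y \<bullet> b" "y \<bullet> b < grid_floor h y \<bullet> b + h"
      using mem_cube_grid_floor[OF h, of y] b unfolding cube_def by auto
    then show ?thesis
      by (intro power_mono) (simp_all add: inner_diff_left)
  qed
  have "(norm (y - grid_floor h y))\<^sup>2 = (\<Sum>b\<in>Basis. ((y - grid_floor h y) \<bullet> b)\<^sup>2)"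
    unfolding power2_norm_eq_inner by (subst euclidean_inner) (simp add: power2_eq_square)
  also have "\<dots> \<le> (\<Sum>b\<in>(Basis::'a set). h\<^sup>2)"
    by (intro sum_mono coord)
  also have "\<dots> = (sqrt (real DIM('a)) * h)\<^sup>2"
    by (simp add: power_mult_distrib)
  finally have "norm (y - grid_floor h y) \<le> sqrt (real DIM('a)) * h"
    by (rule power2_le_imp_le) (use h in simp)
  then show ?thesis
    by (simp add: dist_norm)
qed

lemma vimage_grid_floor:
  fixes x :: "'a::euclidean_space"
  assumes h: "h > 0" and x: "x \<in> grid h N"
  shows "grid_floor h -` {x} = cube x h"
proof -
  have "grid_floor h y \<bullet> b = x \<bullet> b \<longleftrightarrow> x \<bullet> b \<le> y \<bullet> b \<and> y \<bullet> b < x \<bullet> b + h"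
    if b: "b \<in> Basis" for y b
  proof -
    obtain k :: int where k: "x \<bullet> b = of_int k * h"
      using x b unfolding grid_def by blast
    have "grid_floor h y \<bullet> b = x \<bullet> b \<longleftrightarrow> \<lfloor>(y \<bullet> b) / h\<rfloor> = k"
      using b k h by (simp add: inner_grid_floor)
    also have "\<dots> \<longleftrightarrow> of_int k \<le> (y \<bullet> b) / h \<and> (y \<bullet> b) / h < of_int k + 1"
      by (rule floor_eq_iff)
    also have "\<dots> \<longleftrightarrow> x \<bullet> b \<le> y \<bullet> b \<and> y \<bullet> b < x \<bullet> b + h"
      using h k by (simp add: pos_le_divide_eq pos_divide_less_eq distrib_right)
    finally show ?thesis .
  qed
  then show ?thesis
    by (auto simp: cube_def euclidean_eq_iff[of _ x])
qed

(* With step 1/m the bound -N is itself a lattice point, so rounding down cannot leave [-N,N]. *)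
lemma grid_floor_in_grid:
  fixes y :: "'a::euclidean_space"
  assumes m: "m > 0" and y: "norm y \<le> real N"
  shows "grid_floor (1 / real m) y \<in> grid (1 / real m) N"
  unfolding grid_def
proof (intro CollectI ballI conjI)
  fix b :: 'a assume b: "b \<in> Basis"
  let ?h = "1 / real m"
  show "\<exists>k::int. grid_floor ?h y \<bullet> b = of_int k * ?h"
    using b by (simp add: inner_grid_floor)
  have yb: "\<bar>y \<bullet> b\<bar> \<le> real N"
    using Basis_le_norm[OF b, of y] y by linarith
  have "grid_floor ?h y \<bullet> b \<le> y \<bullet> b"
    using mem_cube_grid_floor[of ?h y] m b by (simp add: cube_def)
  moreover have "- real N * real m \<le> y \<bullet> b * real m"
    using yb by (intro mult_right_mono) auto
  then have "- (int N * int m) \<le> \<lfloor>y \<bullet> b / ?h\<rfloor>"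
    by (simp add: le_floor_iff)
  then have "of_int (- (int N * int m)) \<le> (of_int \<lfloor>y \<bullet> b / ?h\<rfloor> :: real)"
    by (simp only: of_int_le_iff)
  then have "- real N \<le> grid_floor ?h y \<bullet> b"
    using m b by (simp add: inner_grid_floor pos_le_divide_eq)
  ultimately show "\<bar>grid_floor ?h y \<bullet> b\<bar> \<le> real N"
    using yb by linarith
qed

lemma finite_grid:
  assumes h: "h > 0"
  shows "finite (grid h N :: 'a::euclidean_space set)"
proof -
  define n where "n = \<lceil>real N / h\<rceil>"
  define S where "S = (\<lambda>k::int. of_int k * h) ` {-n..n}"
  have coords: "x \<bullet> b \<in> S" if x: "x \<in> grid h N" and b: "b \<in> Basis" for x :: 'a and b
  proof -
    obtain k :: int where k: "x \<bullet> b = of_int k * h" "\<bar>x \<bullet> b\<bar> \<le> real N"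
      using x b unfolding grid_def by blast
    then have "\<bar>of_int k\<bar> \<le> real N / h"
      using h by (simp add: abs_mult pos_le_divide_eq)
    then have "k \<in> {-n..n}"
      unfolding n_def by auto linarith+
    with k show ?thesis
      unfolding S_def by blast
  qed
  have "inj_on (\<lambda>x::'a. restrict (\<lambda>b. x \<bullet> b) Basis) (grid h N)"
    by (rule inj_onI) (metis euclidean_eq_iff restrict_apply')
  moreover have "(\<lambda>x::'a. restrict (\<lambda>b. x \<bullet> b) Basis) ` grid h N \<subseteq> PiE Basis (\<lambda>_. S)"
    using coords by auto
  moreover have "finite (PiE (Basis::'a set) (\<lambda>_. S))"
    unfolding S_def by (simp add: finite_PiE)
  ultimately show ?thesis
    by (rule inj_on_finite)
qed

lemma AE_in_msupp:
  fixes M :: "'a::{metric_space, second_countable_topology} measure"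
  assumes M: "sets M = sets borel"
  shows "AE x in M. x \<in> msupp M"
proof -
  define \<U> where "\<U> = {U. open U \<and> emeasure M U = 0}"
  have compl_msupp: "- msupp M = \<Union>\<U>"
  proof (intro equalityI subsetI)
    fix z assume "z \<in> - msupp M"
    then obtain e where "e > 0" "emeasure M (ball z e) = 0"
      unfolding msupp_def by (auto simp: not_less)
    then show "z \<in> \<Union>\<U>"
      unfolding \<U>_def by (intro UnionI[of "ball z e"]) auto
  next
    fix z assume "z \<in> \<Union>\<U>"
    then obtain U where U: "open U" "emeasure M U = 0" "z \<in> U"
      unfolding \<U>_def by blast
    then obtain e where e: "e > 0" "ball z e \<subseteq> U"
      by (meson open_contains_ball)
    have "emeasure M (ball z e) \<le> emeasure M U"
      using e(2) U(1) M by (intro emeasure_mono) auto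
    with U(2) e(1) show "z \<in> - msupp M"
      unfolding msupp_def by auto
  qed
  obtain \<V> where \<V>: "\<V> \<subseteq> \<U>" "countable \<V>" "\<Union>\<V> = \<Union>\<U>"
    using Lindelof[of \<U>] unfolding \<U>_def by blast
  have "(\<Union>U\<in>\<V>. U) \<in> null_sets M"
    using \<V>(1,2) M by (intro null_sets_UN') (auto simp: \<U>_def null_sets_def)
  then show ?thesis
    using compl_msupp \<V>(3) by (intro AE_I'[of "\<Union>\<V>"]) auto
qed

lemma image_msupp_subset_msupp_distr:
  fixes M :: "'a::metric_space measure" and f :: "'a \<Rightarrow> 'b::metric_space"
  assumes M: "sets M = sets borel" and f: "continuous_on UNIV f"
  shows "f ` msupp M \<subseteq> msupp (distr M borel f)"
proof (intro image_subsetI)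
  fix z assume z: "z \<in> msupp M"
  have f_meas: "f \<in> measurable M borel"
    using borel_measurable_continuous_onI[OF f] by (simp add: measurable_cong_sets[OF M refl])
  show "f z \<in> msupp (distr M borel f)"
    unfolding msupp_def
  proof (intro CollectI allI impI)
    fix e :: real assume e: "e > 0"
    then obtain d where d: "d > 0" "\<And>y. dist y z < d \<Longrightarrow> dist (f y) (f z) < e"
      using f unfolding continuous_on_iff by blast
    have "0 < emeasure M (ball z d)"
      using z d(1) unfolding msupp_def by auto
    also have "\<dots> \<le> emeasure M (f -` ball (f z) e \<inter> space M)"
      using d(2) measurable_sets[OF f_meas, of "ball (f z) e"] sets_eq_imp_space_eq[OF M]
      by (intro emeasure_mono) (auto simp: dist_commute)
    also have "\<dots> = emeasure (distr M borel f) (ball (f z) e)"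
      by (rule emeasure_distr[symmetric, OF f_meas]) simp
    finally show "0 < emeasure (distr M borel f) (ball (f z) e)" .
  qed
qed

lemma dirac_sum_eq_distr:
  fixes M :: "'a::metric_space measure" and p :: "'a \<Rightarrow> 'b::metric_space"
  assumes M: "sets M = sets borel" and p: "p \<in> borel_measurable borel"
    and G: "finite G" and AE_G: "AE x in M. p x \<in> G"
    and w: "\<And>x. x \<in> G \<Longrightarrow> w x = emeasure M (p -` {x})"
  shows "dirac_sum G w = distr M borel p"
proof -
  have p_meas: "p \<in> measurable M borel"
    using p by (simp add: measurable_cong_sets[OF M refl])
  have space_M: "space M = UNIV"
    using sets_eq_imp_space_eq[OF M] by simp
  have vimage_sets: "p -` B \<in> sets M" if "B \<in> sets borel" for B
    using measurable_sets[OF p_meas that] space_M by simp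
  have emeasure_distr_eq: "emeasure (distr M borel p) A = (\<Sum>x\<in>G. w x * indicator A x)"
    if A: "A \<in> sets borel" for A
  proof -
    have "emeasure (distr M borel p) A = emeasure M (p -` A)"
      using emeasure_distr[OF p_meas A] space_M by simp
    also have "\<dots> = emeasure M (\<Union>x\<in>G \<inter> A. p -` {x})"
      using AE_G G A by (intro emeasure_eq_AE) (auto intro!: vimage_sets)
    also have "\<dots> = (\<Sum>x\<in>G \<inter> A. emeasure M (p -` {x}))"
      using G by (intro sum_emeasure[symmetric]) (auto intro!: vimage_sets simp: disjoint_family_on_def)
    also have "\<dots> = (\<Sum>x\<in>G. w x * indicator A x)"
      using G w by (simp add: sum.inter_restrict indicator_def if_distrib cong: if_cong)
    finally show ?thesis .
  qed
  have "distr M borel p = measure_of UNIV (sets borel) (emeasure (distr M borel p))"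
    using measure_of_of_measure[of "distr M borel p"] by simp
  also have "\<dots> = dirac_sum G w"
    unfolding dirac_sum_def
    by (rule measure_of_eq) (simp_all add: emeasure_distr_eq sets.sigma_sets_eq[of borel, simplified])
  finally show ?thesis ..
qed

lemma BL1_const: "\<bar>c\<bar> \<le> 1 \<Longrightarrow> (\<lambda>_. c) \<in> BL1"
  unfolding BL1_def by (auto intro: lipschitz_on_le[OF lipschitz_on_constant])

lemma borel_measurable_BL1: "\<psi> \<in> BL1 \<Longrightarrow> \<psi> \<in> borel_measurable borel"
  unfolding BL1_def by (auto intro: borel_measurable_continuous_onI lipschitz_on_continuous_on)

lemma integrable_BL1:
  assumes M: "finite_borel_measure M" and \<psi>: "\<psi> \<in> BL1"
  shows "integrable M \<psi>"
proof -
  interpret finite_measure M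
    using M by (simp add: finite_borel_measure_def)
  have "\<psi> \<in> borel_measurable M"
    using M borel_measurable_BL1[OF \<psi>]
    by (simp add: finite_borel_measure_def measurable_cong_sets[of M borel])
  with \<psi> show ?thesis
    by (intro integrable_const_bound[where B=1]) (auto simp: BL1_def)
qed

lemma measure_le_bl_norm:
  assumes M: "finite_borel_measure M"
  shows "measure M (space M) \<le> bl_norm M"
proof -
  have "integral\<^sup>L M \<psi> \<le> integral\<^sup>L M (\<lambda>_. 1)" if \<psi>: "\<psi> \<in> BL1" for \<psi>
    using integrable_BL1[OF M \<psi>] integrable_BL1[OF M BL1_const[of 1]] \<psi>
    by (intro integral_mono) (auto simp: BL1_def abs_le_iff)
  then have "integral\<^sup>L M (\<lambda>_. 1) \<le> bl_norm M"
    unfolding bl_norm_def by (intro cSUP_upper[OF BL1_const] bdd_aboveI2) auto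
  then show ?thesis
    by simp
qed

lemma finite_borel_measure_distr:
  assumes "finite_borel_measure M" and "p \<in> borel_measurable M"
  shows "finite_borel_measure (distr M borel p)"
  using assms finite_measure.finite_measure_distr unfolding finite_borel_measure_def by auto

lemma bl_dist_distr_le:
  fixes M :: "'a::metric_space measure"
  assumes M: "finite_borel_measure M" and p: "p \<in> borel_measurable borel"
    and moves: "\<And>y. dist y (p y) \<le> c"
  shows "bl_dist M (distr M borel p) \<le> c * measure M (space M)"
  unfolding bl_dist_def
proof (rule cSUP_least)
  show "BL1 \<noteq> {}"
    using BL1_const[of 0] by auto
  interpret finite_measure M
    using M by (simp add: finite_borel_measure_def)
  have p_meas: "p \<in> measurable M borel"
    using M p by (simp add: finite_borel_measure_def measurable_cong_sets[of M borel])
  fix \<psi> :: "'a \<Rightarrow> real" assume \<psi>: "\<psi> \<in> BL1"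
  have int_\<psi>: "integrable M \<psi>"
    by (rule integrable_BL1[OF M \<psi>])
  have int_\<psi>p: "integrable M (\<lambda>x. \<psi> (p x))"
    using integrable_BL1[OF finite_borel_measure_distr[OF M p_meas] \<psi>]
    by (simp add: integrable_distr_eq[OF p_meas borel_measurable_BL1[OF \<psi>]])
  have "integral\<^sup>L M \<psi> - integral\<^sup>L (distr M borel p) \<psi> = integral\<^sup>L M (\<lambda>x. \<psi> x - \<psi> (p x))"
    using int_\<psi> int_\<psi>p by (simp add: integral_distr[OF p_meas borel_measurable_BL1[OF \<psi>]])
  also have "\<dots> \<le> integral\<^sup>L M (\<lambda>_. c)"
  proof (rule integral_mono)
    show "integrable M (\<lambda>x. \<psi> x - \<psi> (p x))"
      using int_\<psi> int_\<psi>p by simp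
    fix x
    have "dist (\<psi> x) (\<psi> (p x)) \<le> 1 * dist x (p x)"
      using \<psi> unfolding BL1_def by (intro lipschitz_onD) auto
    then show "\<psi> x - \<psi> (p x) \<le> c"
      using moves[of x] by (simp add: dist_real_def)
  qed simp
  also have "\<dots> = c * measure M (space M)"
    by simp
  finally show "integral\<^sup>L M \<psi> - integral\<^sup>L (distr M borel p) \<psi> \<le> c * measure M (space M)" .
qed

lemma borel_measurable_map_prod[measurable]:
  fixes f :: "'a::second_countable_topology \<Rightarrow> 'b::second_countable_topology"
    and g :: "'c::second_countable_topology \<Rightarrow> 'd::second_countable_topology"
  assumes [measurable]: "f \<in> borel_measurable borel" "g \<in> borel_measurable borel"
  shows "map_prod f g \<in> borel_measurable borel"
  unfolding borel_prod[symmetric] map_prod_def split_beta' by measurable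

lemma approx_x_eq_distr:
  fixes \<mu> :: "'a::euclidean_space measure"
  assumes \<mu>: "sets \<mu> = sets borel" and N: "N > 0" and supp: "msupp \<mu> \<subseteq> cball 0 (real N)"
  shows "approx_x N \<mu> = distr \<mu> borel (grid_floor (1 / real N ^ 2))"
proof -
  let ?h = "1 / real N ^ 2"
  have h: "?h > 0"
    using N by simp
  have "AE y in \<mu>. grid_floor ?h y \<in> grid ?h N"
    using AE_in_msupp[OF \<mu>]
  proof eventually_elim
    case (elim y)
    then show ?case
      using supp N grid_floor_in_grid[of "N ^ 2" y N] by auto
  qed
  then show ?thesis
    unfolding approx_x_def grid_x_def
    by (intro dirac_sum_eq_distr[OF \<mu> _ finite_grid[OF h]]) (auto simp: vimage_grid_floor[OF h])
qed

lemma approx_v_eq_distr: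
  fixes W :: "('a::euclidean_space \<times> 'a) measure"
  assumes W: "sets W = sets borel" and N: "N > 0" and supp: "msupp W \<subseteq> cball 0 (real N)"
  shows "approx_v N W = distr W borel (map_prod (grid_floor (1 / real N ^ 2)) (grid_floor (1 / real N)))"
proof -
  let ?h = "1 / real N ^ 2" and ?k = "1 / real N"
  let ?p = "map_prod (grid_floor ?h) (grid_floor ?k) :: 'a \<times> 'a \<Rightarrow> 'a \<times> 'a"
  have h: "?h > 0" and k: "?k > 0"
    using N by simp_all
  have p_meas: "?p \<in> borel_measurable borel"
    by measurable
  have "AE z in W. ?p z \<in> grid ?h N \<times> grid ?k N"
    using AE_in_msupp[OF W]
  proof eventually_elim
    case (elim z)
    then have "norm (fst z) \<le> real N" "norm (snd z) \<le> real N"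
      using supp norm_fst_le[of "fst z" "snd z"] norm_snd_le[of "snd z" "fst z"] by auto
    then show ?case
      using N grid_floor_in_grid[of "N ^ 2" "fst z" N] grid_floor_in_grid[of N "snd z" N]
      by (auto simp: map_prod_def split_beta)
  qed
  moreover have "?p -` {(x, v)} = cube x ?h \<times> cube v ?k"
    if "x \<in> grid ?h N" "v \<in> grid ?k N" for x v
    using vimage_grid_floor[OF h that(1)] vimage_grid_floor[OF k that(2)] by auto
  ultimately show ?thesis
    unfolding approx_v_def grid_x_def grid_v_def
    by (intro dirac_sum_eq_distr[OF W p_meas] finite_cartesian_product finite_grid h k) auto
qed

lemma bl_dist_approx_x_le:
  fixes \<mu> :: "'a::euclidean_space measure"
  assumes \<mu>: "finite_borel_measure \<mu>" and N: "N > 0" and supp: "msupp \<mu> \<subseteq> cball 0 (real N)"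
  shows "bl_dist \<mu> (approx_x N \<mu>) \<le> sqrt (real DIM('a)) * (1 / real N) ^ 2 * measure \<mu> (space \<mu>)"
proof -
  let ?h = "1 / real N ^ 2"
  have "sets \<mu> = sets borel"
    using \<mu> by (simp add: finite_borel_measure_def)
  then have approx: "approx_x N \<mu> = distr \<mu> borel (grid_floor ?h)"
    by (rule approx_x_eq_distr[OF _ N supp])
  have moves: "dist y (grid_floor ?h y) \<le> sqrt (real DIM('a)) * ?h" for y :: 'a
    using N by (intro dist_grid_floor_le) simp
  have "bl_dist \<mu> (approx_x N \<mu>) \<le> sqrt (real DIM('a)) * ?h * measure \<mu> (space \<mu>)"
    unfolding approx by (rule bl_dist_distr_le[OF \<mu> borel_measurable_grid_floor moves])
  then show ?thesis
    by (simp add: power_one_over)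
qed

lemma bl_dist_approx_v_le:
  fixes W :: "('a::euclidean_space \<times> 'a) measure"
  assumes W: "finite_borel_measure W" and N: "N > 0" and supp: "msupp W \<subseteq> cball 0 (real N)"
  shows "bl_dist W (approx_v N W) \<le> 2 * sqrt (real DIM('a)) * (1 / real N) * measure W (space W)"
proof -
  let ?h = "1 / real N ^ 2" and ?k = "1 / real N"
  let ?p = "map_prod (grid_floor ?h) (grid_floor ?k) :: 'a \<times> 'a \<Rightarrow> 'a \<times> 'a"
  have h: "?h > 0" and k: "?k > 0" and hk: "?h \<le> ?k"
    using N by (simp_all add: field_simps power2_eq_square)
  have moves: "dist z (?p z) \<le> 2 * sqrt (real DIM('a)) * ?k" for z
  proof -
    obtain x v where z: "z = (x, v)"
      by (cases z)
    have "dist z (?p z) \<le> dist x (grid_floor ?h x) + dist v (grid_floor ?k v)"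
      unfolding z dist_norm using norm_Pair_le[of "x - grid_floor ?h x" "v - grid_floor ?k v"] by simp
    also have "\<dots> \<le> sqrt (real DIM('a)) * ?h + sqrt (real DIM('a)) * ?k"
      by (intro add_mono dist_grid_floor_le h k)
    also have "\<dots> \<le> sqrt (real DIM('a)) * ?k + sqrt (real DIM('a)) * ?k"
      using hk by (intro add_right_mono mult_left_mono) simp_all
    finally show ?thesis
      by simp
  qed
  have "sets W = sets borel"
    using W by (simp add: finite_borel_measure_def)
  then have "approx_v N W = distr W borel ?p"
    by (rule approx_v_eq_distr[OF _ N supp])
  moreover have "?p \<in> borel_measurable borel"
    by measurable
  ultimately show ?thesis
    using bl_dist_distr_le[OF W _ moves] by simp
qed

lemma bounded_msupp_vector_field:
  fixes \<mu> :: "'a::euclidean_space measure"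
  assumes V: "measure_vector_field V" "V1 V" and \<mu>: "finite_borel_measure \<mu>"
    and bdd: "bounded (msupp \<mu>)"
  shows "bounded (msupp (V \<mu>))"
proof -
  obtain R where R: "R > 0" "\<And>x. x \<in> msupp \<mu> \<Longrightarrow> norm x \<le> R"
    using bdd by (auto simp: bounded_pos)
  obtain C where C: "C > 0" and V1_\<mu>: "(SUP z\<in>msupp (V \<mu>). ereal (norm (snd z)))
      \<le> ereal C * (1 + (SUP z\<in>msupp (V \<mu>). ereal (norm (fst z))))"
    using V(2) \<mu> unfolding V1_def by blast
  have sets_V\<mu>: "sets (V \<mu>) = sets borel" and marginal: "distr (V \<mu>) borel fst = \<mu>"
    using V(1) \<mu> unfolding measure_vector_field_def finite_borel_measure_def by auto
  have "continuous_on UNIV (fst :: 'a \<times> 'a \<Rightarrow> 'a)"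
    by (rule continuous_on_fst[OF continuous_on_id])
  from image_msupp_subset_msupp_distr[OF sets_V\<mu> this]
  have fst_msupp: "fst ` msupp (V \<mu>) \<subseteq> msupp \<mu>"
    unfolding marginal .
  then have "(SUP z\<in>msupp (V \<mu>). ereal (norm (fst z))) \<le> ereal R"
    using R(2) by (intro SUP_least) auto
  then have "ereal C * (1 + (SUP z\<in>msupp (V \<mu>). ereal (norm (fst z)))) \<le> ereal C * (1 + ereal R)"
    using C by (intro ereal_mult_left_mono add_left_mono) auto
  then have V1_bound: "ereal C * (1 + (SUP z\<in>msupp (V \<mu>). ereal (norm (fst z)))) \<le> ereal (C * (1 + R))"
    by (simp add: one_ereal_def)
  have "norm z \<le> R + C * (1 + R)" if z: "z \<in> msupp (V \<mu>)" for z
  proof -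
    have "ereal (norm (snd z)) \<le> (SUP z\<in>msupp (V \<mu>). ereal (norm (snd z)))"
      using z by (rule SUP_upper)
    also note V1_\<mu>
    also note V1_bound
    finally have "norm (snd z) \<le> C * (1 + R)"
      by simp
    moreover have "norm (fst z) \<le> R"
      using fst_msupp R(2) z by blast
    ultimately show ?thesis
      using norm_Pair_le[of "fst z" "snd z"] by simp
  qed
  then show ?thesis
    unfolding bounded_iff by blast
qed

theorem proposition4p1:
  fixes \<mu> :: "'a::euclidean_space measure"
    and V :: "'a measure \<Rightarrow> ('a \<times> 'a) measure"
  assumes "finite_borel_measure \<mu>"
    and "compact (msupp \<mu>)"
    and "measure_vector_field V"
    and "V1 V"
  shows "\<exists>N0::nat. \<forall>N\<ge>N0.
     bl_dist \<mu> (approx_x N \<mu>) \<le> sqrt (real DIM('a)) * (1 / real N) ^ 2 * bl_norm \<mu> \<and>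
     bl_dist (V \<mu>) (approx_v N (V \<mu>)) \<le> 2 * sqrt (real DIM('a)) * (1 / real N) * bl_norm \<mu>"
proof -
  have V\<mu>: "finite_borel_measure (V \<mu>)" and marginal: "distr (V \<mu>) borel fst = \<mu>"
    using assms(1,3) unfolding measure_vector_field_def by auto
  have "sets \<mu> = sets borel"
    using assms(1) by (simp add: finite_borel_measure_def)
  from sets_eq_imp_space_eq[OF this] have space_\<mu>: "space \<mu> = UNIV"
    by simp
  have "fst \<in> borel_measurable (V \<mu>)"
    using V\<mu> borel_measurable_continuous_onI[OF continuous_on_fst[OF continuous_on_id]]
    by (simp add: finite_borel_measure_def measurable_cong_sets[of "V \<mu>" borel])
  from measure_distr[OF this, of UNIV]
  have same_mass: "measure (V \<mu>) (space (V \<mu>)) = measure \<mu> (space \<mu>)"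
    unfolding marginal by (simp add: space_\<mu>)
  obtain R1 where R1: "\<forall>x\<in>msupp \<mu>. norm x \<le> R1"
    using compact_imp_bounded[OF assms(2)] unfolding bounded_iff by blast
  obtain R2 where R2: "\<forall>z\<in>msupp (V \<mu>). norm z \<le> R2"
    using bounded_msupp_vector_field[OF assms(3,4,1) compact_imp_bounded[OF assms(2)]]
    unfolding bounded_iff by blast
  show ?thesis
  proof (intro exI[of _ "max 1 (nat \<lceil>max R1 R2\<rceil>)"] allI impI conjI)
    fix N assume "max 1 (nat \<lceil>max R1 R2\<rceil>) \<le> N"
    then have N: "N > 0" and "R1 \<le> real N" "R2 \<le> real N"
      by linarith+
    then have supp: "msupp \<mu> \<subseteq> cball 0 (real N)" "msupp (V \<mu>) \<subseteq> cball 0 (real N)"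
      using R1 R2 by fastforce+
    have "bl_dist \<mu> (approx_x N \<mu>) \<le> sqrt (real DIM('a)) * (1 / real N) ^ 2 * measure \<mu> (space \<mu>)"
      by (rule bl_dist_approx_x_le[OF assms(1) N supp(1)])
    also have "\<dots> \<le> sqrt (real DIM('a)) * (1 / real N) ^ 2 * bl_norm \<mu>"
      by (intro mult_left_mono measure_le_bl_norm[OF assms(1)]) simp
    finally show "bl_dist \<mu> (approx_x N \<mu>) \<le> sqrt (real DIM('a)) * (1 / real N) ^ 2 * bl_norm \<mu>" .
    have "bl_dist (V \<mu>) (approx_v N (V \<mu>)) \<le> 2 * sqrt (real DIM('a)) * (1 / real N) * measure \<mu> (space \<mu>)"
      using bl_dist_approx_v_le[OF V\<mu> N supp(2)] by (simp only: same_mass)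
    also have "\<dots> \<le> 2 * sqrt (real DIM('a)) * (1 / real N) * bl_norm \<mu>"
      by (intro mult_left_mono measure_le_bl_norm[OF assms(1)]) simp
    finally show "bl_dist (V \<mu>) (approx_v N (V \<mu>)) \<le> 2 * sqrt (real DIM('a)) * (1 / real N) * bl_norm \<mu>" .
  qed
qed

end
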